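(* Let $\mu_t,c_t\in(0,1)$ with $(\mu_t-c_t,\mu_t+c_t)\subset(0,1)$, let $\mu_t^*\in[0,1]$, let $\mathcal{A}$ be a set of actions, $a_t\in\mathcal{A}$, and $l_t:\mathcal{A}\times\{0,1\}\to\mathbb{R}$. Define $$L_t^{\max}=\max_{\tilde\mu\in[\mu_t-c_t,\mu_t+c_t]}\mathbb{E}_{Y\sim\mathrm{Bernoulli}(\tilde\mu)}[l_t(a_t,Y)],\qquad L_t^{\min}=\min_{\tilde\mu\in[\mu_t-c_t,\mu_t+c_t]}\mathbb{E}_{Y\sim\mathrm{Bernoulli}(\tilde\mu)}[l_t(a_t,Y)],$$ $L_t^*=\mathbb{E}_{Y\sim\mathrm{Bernoulli}(\mu_t^* )}[l_t(a_t,Y)]$, and for a stake $b_t\in\mathbb{R}$, $$L_t^{\mathrm{pay}}=L_t^*-\mathbb{E}_{Y\sim\mathrm{Bernoulli}(\mu_t^* )}\big[b_t(Y-\mu_t)+|b_t|c_t\big].$$ If $b_t=l_t(a_t,1)-l_t(a_t,0)$, then $L_t^{\mathrm{pay}}\in[L_t^{\min},L_t^{\max}]$. *)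

theory Defs
  imports "HOL-Probability.Probability"
begin

text \<open>Expected loss of action a when Y ~ Bernoulli(p); outcomes {0,1} encoded as bool
  (False = 0, True = 1).\<close>
definition exp_loss :: "('a \<Rightarrow> bool \<Rightarrow> real) \<Rightarrow> 'a \<Rightarrow> real \<Rightarrow> real" where
  "exp_loss l a p = measure_pmf.expectation (bernoulli_pmf p) (\<lambda>Y. l a Y)"

definition L_max :: "('a \<Rightarrow> bool \<Rightarrow> real) \<Rightarrow> 'a \<Rightarrow> real \<Rightarrow> real \<Rightarrow> real" where
  "L_max l a \<mu> c = (SUP m\<in>{\<mu> - c..\<mu> + c}. exp_loss l a m)"

definition L_min :: "('a \<Rightarrow> bool \<Rightarrow> real) \<Rightarrow> 'a \<Rightarrow> real \<Rightarrow> real \<Rightarrow> real" where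
  "L_min l a \<mu> c = (INF m\<in>{\<mu> - c..\<mu> + c}. exp_loss l a m)"

definition L_pay :: "('a \<Rightarrow> bool \<Rightarrow> real) \<Rightarrow> 'a \<Rightarrow> real \<Rightarrow> real \<Rightarrow> real \<Rightarrow> real \<Rightarrow> real" where
  "L_pay l a \<mu> c \<mu>s b = exp_loss l a \<mu>s
     - measure_pmf.expectation (bernoulli_pmf \<mu>s) (\<lambda>Y. b * (of_bool Y - \<mu>) + \<bar>b\<bar> * c)"

end

theory Submission
  imports Defs
begin

text \<open>For the stake \<open>b = l a True - l a False\<close> the expected loss is affine in the mean with
  slope \<open>b\<close>. The expected payment \<open>b (\<mu>\<^sup>* - \<mu>) + |b| c\<close> therefore cancels the dependence on
  \<open>\<mu>\<^sup>*\<close> and moves the mean to the endpoint \<open>\<mu> - sgn b \<cdot> c\<close> of the confidence interval, so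
  \<open>L_pay\<close> is the expected loss at a point of that interval.\<close>

lemma exp_loss_bernoulli:
  assumes "0 \<le> p" "p \<le> 1"
  shows "exp_loss l a p = l a False + p * (l a True - l a False)"
  using assms by (simp add: exp_loss_def algebra_simps)

lemma exp_loss_bounds:
  assumes "0 \<le> p" "p \<le> 1"
  shows "min (l a True) (l a False) \<le> exp_loss l a p"
    and "exp_loss l a p \<le> max (l a True) (l a False)"
proof -
  have convex: "exp_loss l a p = p * l a True + (1 - p) * l a False"
    using exp_loss_bernoulli[OF assms] by (simp add: algebra_simps)
  have "p * (- l a True) + (1 - p) * (- l a False) \<le> - min (l a True) (l a False)"
    using assms by (intro convex_bound_le) auto
  then show "min (l a True) (l a False) \<le> exp_loss l a p"
    unfolding convex by (simp add: algebra_simps)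
  show "exp_loss l a p \<le> max (l a True) (l a False)"
    unfolding convex using assms by (intro convex_bound_le) auto
qed

lemma exp_loss_in_L_min_L_max:
  assumes "{\<mu> - c..\<mu> + c} \<subseteq> {0..1}" "m \<in> {\<mu> - c..\<mu> + c}"
  shows "exp_loss l a m \<in> {L_min l a \<mu> c..L_max l a \<mu> c}"
proof -
  have "bdd_below (exp_loss l a ` {\<mu> - c..\<mu> + c})"
    using assms(1) exp_loss_bounds(1) by (intro bdd_belowI2) fastforce
  moreover have "bdd_above (exp_loss l a ` {\<mu> - c..\<mu> + c})"
    using assms(1) exp_loss_bounds(2) by (intro bdd_aboveI2) fastforce
  ultimately show ?thesis
    unfolding L_min_def L_max_def using assms(2) by (auto intro: cINF_lower cSUP_upper)
qed

lemma L_pay_eq_exp_loss_endpoint: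
  assumes "0 \<le> \<mu>s" "\<mu>s \<le> 1" "0 \<le> \<mu> - sgn b * c" "\<mu> - sgn b * c \<le> 1"
    and "b = l a True - l a False"
  shows "L_pay l a \<mu> c \<mu>s b = exp_loss l a (\<mu> - sgn b * c)"
proof -
  have payment: "measure_pmf.expectation (bernoulli_pmf \<mu>s) (\<lambda>Y. b * (of_bool Y - \<mu>) + \<bar>b\<bar> * c)
      = b * (\<mu>s - \<mu>) + \<bar>b\<bar> * c"
    using assms(1,2) by (simp add: algebra_simps)
  show ?thesis
    unfolding L_pay_def payment exp_loss_bernoulli[OF assms(1,2)]
      exp_loss_bernoulli[OF assms(3,4)] assms(5)[symmetric]
    by (simp add: abs_sgn algebra_simps)
qed

theorem proposition2:
  fixes \<mu> c \<mu>s b :: real and A :: "'a set" and a :: 'a and l :: "'a \<Rightarrow> bool \<Rightarrow> real"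
  assumes "0 < \<mu>" "\<mu> < 1" "0 < c" "c < 1"
    and "{\<mu> - c<..<\<mu> + c} \<subseteq> {0<..<1}"
    and "0 \<le> \<mu>s" "\<mu>s \<le> 1"
    and "a \<in> A"
    and "b = l a True - l a False"
  shows "L_pay l a \<mu> c \<mu>s b \<in> {L_min l a \<mu> c .. L_max l a \<mu> c}"
proof -
  have interval: "{\<mu> - c..\<mu> + c} \<subseteq> {0..1}"
    using assms(3,5) by (simp add: greaterThanLessThan_subseteq_greaterThanLessThan)
  have endpoint: "\<mu> - sgn b * c \<in> {\<mu> - c..\<mu> + c}"
    using assms(3) by (simp add: sgn_if)
  then have "L_pay l a \<mu> c \<mu>s b = exp_loss l a (\<mu> - sgn b * c)"
    using interval assms(6,7,9) by (intro L_pay_eq_exp_loss_endpoint) auto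
  with exp_loss_in_L_min_L_max[OF interval endpoint] show ?thesis
    by simp
qed

end
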